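(* Let $X$ be a topological space with $|X|\ge 2$, $G$ an infinite Abelian group, $f\colon G\to X$ a Korovin mapping and $G_f\subseteq X^G$ the corresponding Korovin orbit. Suppose that one of the following holds: (a) the space $X^\omega$ is pseudo-$\aleph_1$-compact; (b) $X$ is first-countable; (c) $X$ is separable. Then $G_f$ is a $T_{3.5}$-space if and only if $X$ is a $T_{3.5}$-space.
   Context: $X^G$ carries the product topology. For $f\in X^G$ and $g\in G$ let $gf\in X^G$ be given by $(gf)(x)=f(xg)$, and let $G_f=\{gf:g\in G\}\subseteq X^G$ with the subspace topology. The map $f\colon G\to X$ is a Korovin mapping if $\pi_M(G_f)=X^M$ for every countable $M\subseteq G$, where $\pi_M\colon X^G\to X^M$ is the projection; in that case $G_f$ is called a Korovin orbit. A space is pseudo-$\aleph_1$-compact if every locally finite family of open sets in it is countable. A space is $T_{3.5}$ if for every closed set $F$ and point $x\notin F$ there is a continuous $h\colon X\to\mathbb{R}$ with $h(x)=1$ and $h(F)\subseteq\{0\}$ (no $T_1$ assumed). *)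

theory Defs
  imports "HOL-Analysis.Analysis"
begin

definition korovin_orbit :: "('g::ab_group_add \<Rightarrow> 'a) \<Rightarrow> ('g \<Rightarrow> 'a) set" where
  "korovin_orbit f = range (\<lambda>g. (\<lambda>x. f (x + g)))"

definition korovin_mapping :: "'a topology \<Rightarrow> ('g::ab_group_add \<Rightarrow> 'a) \<Rightarrow> bool" where
  "korovin_mapping X f \<longleftrightarrow>
     f ` UNIV \<subseteq> topspace X \<and>
     (\<forall>M::'g set. countable M \<longrightarrow>
        (\<lambda>h. restrict h M) ` korovin_orbit f = (PiE M (\<lambda>_. topspace X)))"

definition locally_finite_in :: "'a topology \<Rightarrow> 'a set set \<Rightarrow> bool" where
  "locally_finite_in T \<U> \<longleftrightarrow>
     (\<forall>x \<in> topspace T. \<exists>V. openin T V \<and> x \<in> V \<and> finite {A \<in> \<U>. A \<inter> V \<noteq> {}})"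

definition pseudo_aleph1_compact :: "'a topology \<Rightarrow> bool" where
  "pseudo_aleph1_compact T \<longleftrightarrow>
     (\<forall>\<U>. (\<forall>A \<in> \<U>. openin T A) \<and> locally_finite_in T \<U> \<longrightarrow> countable \<U>)"

text \<open>T_{3.5} as in the paper (no T_1 assumed).\<close>
definition t35_space :: "'a topology \<Rightarrow> bool" where
  "t35_space T \<longleftrightarrow>
     (\<forall>F x. closedin T F \<and> x \<in> topspace T \<and> x \<notin> F \<longrightarrow>
        (\<exists>h. continuous_map T euclideanreal h \<and> h x = 1 \<and> h ` F \<subseteq> {0}))"

end

theory Submission
  imports Defs
begin

(* The implication from X to G_f holds because complete regularity passes to powers and
   subspaces. For the converse, separate x from a closed F by pulling back along a coordinate:
   G_f meets every nonempty set of X^G determined by countably many coordinates, so a point p of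
   G_f with p 0 = x and a continuous psi : G_f -> [0,1] with psi p = 0 and psi = 1 on
   {u. u 0 \<in> F} exist. Each of (a), (b), (c) forces psi to have vanishing oscillation at every
   point of X^G: under (b) by a diagonal argument along countable neighbourhood bases, under (a)
   because psi is then determined up to e by countably many coordinates (otherwise a maximal family
   of e-separating pairs of boxes yields an uncountable locally finite family of open sets in
   X^omega), and (c) implies (a). Hence psi extends continuously to X^G, and the extension along
   the slice y |-> p(0 := y) separates x from F. *)

lemma t35_space_iff_completely_regular_space:
  "t35_space T \<longleftrightarrow> completely_regular_space T"
proof -
  have flip: "continuous_map T euclideanreal (\<lambda>y. 1 - h y)"
    if "continuous_map T euclideanreal h" for h :: "_ \<Rightarrow> real"
    using that by (intro continuous_map_diff) auto
  have "(\<exists>h. continuous_map T euclideanreal h \<and> h x = 1 \<and> h ` F \<subseteq> {0}) \<longleftrightarrow>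
        (\<exists>h. continuous_map T euclideanreal h \<and> h x = 0 \<and> h ` F \<subseteq> {1})" for x F
  proof
    assume "\<exists>h. continuous_map T euclideanreal h \<and> h x = 1 \<and> h ` F \<subseteq> {0}"
    then obtain h where "continuous_map T euclideanreal h" "h x = 1" "h ` F \<subseteq> {0}" by blast
    then show "\<exists>h. continuous_map T euclideanreal h \<and> h x = 0 \<and> h ` F \<subseteq> {1}"
      by (intro exI[of _ "\<lambda>y. 1 - h y"] conjI flip) auto
  next
    assume "\<exists>h. continuous_map T euclideanreal h \<and> h x = 0 \<and> h ` F \<subseteq> {1}"
    then obtain h where "continuous_map T euclideanreal h" "h x = 0" "h ` F \<subseteq> {1}" by blast
    then show "\<exists>h. continuous_map T euclideanreal h \<and> h x = 1 \<and> h ` F \<subseteq> {0}"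
      by (intro exI[of _ "\<lambda>y. 1 - h y"] conjI flip) auto
  qed
  then show ?thesis
    unfolding t35_space_def completely_regular_space_alt by (simp add: imp_conjL)
qed

section \<open>Countable and locally finite families\<close>

lemma finite_subset_incseq_Union:
  fixes F :: "nat \<Rightarrow> 'a set"
  assumes "incseq F" "finite A" "A \<subseteq> (\<Union>n. F n)"
  obtains k where "A \<subseteq> F k"
proof -
  obtain n where n: "\<And>a. a \<in> A \<Longrightarrow> a \<in> F (n a)"
    using assms(3) by (metis UN_iff subsetD)
  obtain k where "n ` A \<subseteq> {..<k}"
    using finite_nat_bounded[OF finite_imageI[OF assms(2)]] by blast
  have "A \<subseteq> F k"
  proof
    fix a assume "a \<in> A"
    then have "n a \<le> k" using \<open>n ` A \<subseteq> {..<k}\<close> by auto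
    then have "F (n a) \<subseteq> F k" using monoD[OF assms(1)] by blast
    then show "a \<in> F k" using n[OF \<open>a \<in> A\<close>] by blast
  qed
  then show thesis by (rule that)
qed

lemma countable_subset_range_inj:
  assumes "countable R" "infinite (UNIV :: 'a set)"
  obtains en :: "nat \<Rightarrow> 'a" where "inj en" "R \<subseteq> range en"
proof -
  obtain e0 :: "nat \<Rightarrow> 'a" where "inj e0"
    using infinite_countable_subset[OF assms(2)] by blast
  then have "infinite (R \<union> range e0)"
    using range_inj_infinite by (metis infinite_Un)
  moreover have "countable (R \<union> range e0)" using assms(1) by simp
  ultimately have "bij_betw (from_nat_into (R \<union> range e0)) UNIV (R \<union> range e0)"
    by (intro bij_betw_from_nat_into)
  then show thesis
    by (intro that[of "from_nat_into (R \<union> range e0)"]) (auto simp: bij_betw_def)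
qed

lemma first_countable_nbhd_sequences:
  assumes "first_countable X"
  obtains \<gamma> :: "'a \<Rightarrow> nat \<Rightarrow> 'a set"
  where "\<And>x n. x \<in> topspace X \<Longrightarrow> openin X (\<gamma> x n)" "\<And>x n. x \<in> topspace X \<Longrightarrow> x \<in> \<gamma> x n"
    "\<And>x U. openin X U \<Longrightarrow> x \<in> U \<Longrightarrow> \<forall>\<^sub>F n in sequentially. \<gamma> x n \<subseteq> U"
proof -
  have "\<exists>\<gamma>. (\<forall>n. openin X (\<gamma> n) \<and> x \<in> \<gamma> n) \<and>
      (\<forall>U. openin X U \<and> x \<in> U \<longrightarrow> (\<forall>\<^sub>F n in sequentially. \<gamma> n \<subseteq> U))"
    if x: "x \<in> topspace X" for x
  proof -
    obtain \<B> where \<B>: "countable \<B>" "\<And>V. V \<in> \<B> \<Longrightarrow> openin X V"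
      and base: "\<And>U. openin X U \<Longrightarrow> x \<in> U \<Longrightarrow> \<exists>V\<in>\<B>. x \<in> V \<and> V \<subseteq> U"
      using assms x unfolding first_countable_def by meson
    define \<B>x where "\<B>x = {V \<in> \<B>. x \<in> V}"
    have "countable \<B>x" using \<B>(1) unfolding \<B>x_def by simp
    have "\<B>x \<noteq> {}" using base[OF openin_topspace x] unfolding \<B>x_def by blast
    define \<beta> where "\<beta> = from_nat_into \<B>x"
    have \<beta>: "openin X (\<beta> n) \<and> x \<in> \<beta> n" for n
      using from_nat_into[OF \<open>\<B>x \<noteq> {}\<close>] \<B>(2) unfolding \<beta>_def \<B>x_def by blast
    have "\<forall>\<^sub>F n in sequentially. \<Inter>(\<beta> ` {..n}) \<subseteq> U" if U: "openin X U" "x \<in> U" for U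
    proof -
      obtain V where V: "V \<in> \<B>x" "V \<subseteq> U"
        using base[OF U] unfolding \<B>x_def by blast
      then obtain N where "\<beta> N = V"
        using from_nat_into_surj[OF \<open>countable \<B>x\<close>] unfolding \<beta>_def by blast
      then have "\<Inter>(\<beta> ` {..n}) \<subseteq> U" if "n \<ge> N" for n
        using that V(2) by auto
      then show ?thesis unfolding eventually_sequentially by blast
    qed
    moreover have "openin X (\<Inter>(\<beta> ` {..n})) \<and> x \<in> \<Inter>(\<beta> ` {..n})" for n
      using \<beta> by (intro conjI openin_Inter) auto
    ultimately show ?thesis by (intro exI[of _ "\<lambda>n. \<Inter>(\<beta> ` {..n})"]) blast
  qed
  then obtain \<gamma> where "\<And>x. x \<in> topspace X \<Longrightarrow> (\<forall>n. openin X (\<gamma> x n) \<and> x \<in> \<gamma> x n) \<and>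
      (\<forall>U. openin X U \<and> x \<in> U \<longrightarrow> (\<forall>\<^sub>F n in sequentially. \<gamma> x n \<subseteq> U))"
    by metis
  then show thesis
    using that[of \<gamma>] openin_subset by blast
qed

(* Otherwise a counterexample M \<supseteq> R can be chosen for every R; iterating from {} gives an
   increasing chain R_n whose union has a witness P, and the finite trace of P on it already lies
   in some R_k, which contradicts the choice of R_(k+1). *)
lemma countable_reflecting_set:
  fixes Q :: "'i set \<Rightarrow> 'p \<Rightarrow> bool" and s :: "'p \<Rightarrow> 'i set"
  assumes ex: "\<And>M. countable M \<Longrightarrow> \<exists>P. Q M P"
    and antimono: "\<And>M M' P. Q M P \<Longrightarrow> M' \<subseteq> M \<Longrightarrow> Q M' P"
    and fin: "\<And>M P. Q M P \<Longrightarrow> finite (s P)"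
  shows "\<exists>R. countable R \<and> (\<forall>M. countable M \<and> R \<subseteq> M \<longrightarrow> (\<exists>P. Q M P \<and> s P \<inter> M \<subseteq> R))"
proof (rule ccontr)
  assume no_R: "\<nexists>R. countable R \<and> (\<forall>M. countable M \<and> R \<subseteq> M \<longrightarrow> (\<exists>P. Q M P \<and> s P \<inter> M \<subseteq> R))"
  have "\<exists>M. countable M \<and> R \<subseteq> M \<and> (\<forall>P. Q M P \<longrightarrow> \<not> s P \<inter> M \<subseteq> R)"
    if "countable R" for R
    using that no_R by metis
  then obtain grow where grow: "\<And>R. countable R \<Longrightarrow>
      countable (grow R) \<and> R \<subseteq> grow R \<and> (\<forall>P. Q (grow R) P \<longrightarrow> \<not> s P \<inter> grow R \<subseteq> R)"
    by metis
  define Rs where "Rs n = (grow ^^ n) {}" for n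
  have countable_Rs: "countable (Rs n)" for n
  proof (induction n)
    case (Suc n) then show ?case using grow[of "Rs n"] by (simp add: Rs_def)
  qed (simp add: Rs_def)
  have Rs: "countable (Rs n) \<and> Rs n \<subseteq> Rs (Suc n)" for n
    using countable_Rs grow[OF countable_Rs[of n]] by (simp add: Rs_def)
  have "countable (\<Union>n. Rs n)" using Rs by blast
  then obtain P where P: "Q (\<Union>n. Rs n) P" using ex by blast
  obtain k where k: "s P \<inter> (\<Union>n. Rs n) \<subseteq> Rs k"
    by (rule finite_subset_incseq_Union[of Rs "s P \<inter> (\<Union>n. Rs n)"])
      (use Rs fin[OF P] in \<open>auto intro: incseq_SucI\<close>)
  have "Q (Rs (Suc k)) P" using antimono[OF P] by blast
  moreover have "s P \<inter> Rs (Suc k) \<subseteq> Rs k" using k by blast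
  ultimately show False using grow[of "Rs k"] Rs by (simp add: Rs_def)
qed

lemma maximal_pairwise_disjnt_subset:
  fixes s :: "'p \<Rightarrow> 'a set"
  shows "\<exists>\<P>\<subseteq>C. pairwise (\<lambda>P P'. disjnt (s P) (s P')) \<P> \<and>
    (\<forall>P\<in>C. pairwise (\<lambda>P P'. disjnt (s P) (s P')) (insert P \<P>) \<longrightarrow> P \<in> \<P>)"
proof -
  let ?A = "{\<P>. \<P> \<subseteq> C \<and> pairwise (\<lambda>P P'. disjnt (s P) (s P')) \<P>}"
  have "\<forall>\<C>\<in>chains ?A. \<Union>\<C> \<in> ?A"
  proof
    fix \<C> assume \<C>: "\<C> \<in> chains ?A"
    then have "pairwise (\<lambda>P P'. disjnt (s P) (s P')) (\<Union>\<C>)"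
      by (intro pairwise_chain_Union) (auto simp: chains_def)
    moreover have "\<Union>\<C> \<subseteq> C" using chainsD2[OF \<C>] by blast
    ultimately show "\<Union>\<C> \<in> ?A" by blast
  qed
  then obtain \<P> where \<P>: "\<P> \<in> ?A" and max: "\<forall>\<Q>\<in>?A. \<P> \<subseteq> \<Q> \<longrightarrow> \<Q> = \<P>"
    using Zorn_Lemma[of ?A] by blast
  have "P \<in> \<P>" if "P \<in> C" "pairwise (\<lambda>P P'. disjnt (s P) (s P')) (insert P \<P>)" for P
  proof -
    have "insert P \<P> \<in> ?A" using that \<P> by blast
    then show "P \<in> \<P>" using max by blast
  qed
  then show ?thesis using \<P> by blast
qed

lemma finite_pairwise_disjnt_containing:
  assumes "pairwise (\<lambda>P P'. disjnt (s P) (s P')) \<P>"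
  shows "finite {P \<in> \<P>. a \<in> s P}"
proof (cases "{P \<in> \<P>. a \<in> s P} = {}")
  case False
  then obtain P0 where P0: "P0 \<in> \<P>" "a \<in> s P0" by blast
  have "{P \<in> \<P>. a \<in> s P} \<subseteq> {P0}"
    using assms P0 unfolding pairwise_def disjnt_def by blast
  then show ?thesis using finite_subset by blast
qed (metis finite.emptyI)

lemma pseudo_aleph1_compact_countable_family:
  assumes "pseudo_aleph1_compact T"
    and opn: "\<And>P. P \<in> \<P> \<Longrightarrow> openin T (Q P)" and ne: "\<And>P. P \<in> \<P> \<Longrightarrow> Q P \<noteq> {}"
    and lf: "\<And>s. s \<in> topspace T \<Longrightarrow> \<exists>N. openin T N \<and> s \<in> N \<and> finite {P \<in> \<P>. Q P \<inter> N \<noteq> {}}"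
  shows "countable \<P>"
proof -
  have "locally_finite_in T (Q ` \<P>)"
    unfolding locally_finite_in_def
  proof
    fix s assume "s \<in> topspace T"
    then obtain N where N: "openin T N" "s \<in> N" "finite {P \<in> \<P>. Q P \<inter> N \<noteq> {}}"
      using lf by blast
    have "{A \<in> Q ` \<P>. A \<inter> N \<noteq> {}} = Q ` {P \<in> \<P>. Q P \<inter> N \<noteq> {}}" by blast
    then show "\<exists>V. openin T V \<and> s \<in> V \<and> finite {A \<in> Q ` \<P>. A \<inter> V \<noteq> {}}"
      using N by auto
  qed
  then have "countable (Q ` \<P>)"
    using assms(1) opn unfolding pseudo_aleph1_compact_def by blast
  moreover have "finite {P \<in> \<P>. Q P = A}" if A: "A \<in> Q ` \<P>" for A
  proof -
    obtain s where s: "s \<in> A" using A ne by blast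
    then have "s \<in> topspace T" using A opn openin_subset by blast
    then obtain N where N: "openin T N" "s \<in> N" "finite {P \<in> \<P>. Q P \<inter> N \<noteq> {}}"
      using lf by blast
    have "{P \<in> \<P>. Q P = A} \<subseteq> {P \<in> \<P>. Q P \<inter> N \<noteq> {}}" using s N(2) by blast
    then show ?thesis using N(3) finite_subset by blast
  qed
  moreover have "\<P> \<subseteq> (\<Union>A\<in>Q ` \<P>. {P \<in> \<P>. Q P = A})" by blast
  ultimately show ?thesis
    by (metis (no_types, lifting) countable_UN countable_finite countable_subset)
qed

lemma separable_imp_pseudo_aleph1_compact:
  assumes "separable_space T"
  shows "pseudo_aleph1_compact T"
  unfolding pseudo_aleph1_compact_def
proof (intro allI impI)
  fix \<U> assume \<U>: "(\<forall>A\<in>\<U>. openin T A) \<and> locally_finite_in T \<U>"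
  obtain D where D: "countable D" "D \<subseteq> topspace T" "T closure_of D = topspace T"
    using assms unfolding separable_space_def by blast
  have "finite {A \<in> \<U>. d \<in> A}" if d: "d \<in> D" for d
  proof -
    obtain V where "openin T V" "d \<in> V" "finite {A \<in> \<U>. A \<inter> V \<noteq> {}}"
      using \<U> D(2) d unfolding locally_finite_in_def by blast
    then show ?thesis by (rule_tac finite_subset[rotated]) auto
  qed
  then have "countable (insert {} (\<Union>d\<in>D. {A \<in> \<U>. d \<in> A}))"
    using D(1) by (simp add: countable_finite)
  moreover have "\<U> \<subseteq> insert {} (\<Union>d\<in>D. {A \<in> \<U>. d \<in> A})"
    using \<U> D(3) unfolding dense_intersects_open by blast
  ultimately show "countable \<U>"
    using countable_subset by blast
qed

section \<open>Continuous extension from a dense subspace\<close>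

definition vanishing_oscillation :: "'a topology \<Rightarrow> 'a set \<Rightarrow> ('a \<Rightarrow> real) \<Rightarrow> bool" where
  "vanishing_oscillation T Y \<phi> \<longleftrightarrow>
     (\<forall>z\<in>topspace T. \<forall>e>0. \<exists>W. openin T W \<and> z \<in> W \<and>
        (\<forall>u\<in>Y \<inter> W. \<forall>v\<in>Y \<inter> W. \<bar>\<phi> u - \<phi> v\<bar> \<le> e))"

definition upper_limit :: "'a topology \<Rightarrow> 'a set \<Rightarrow> ('a \<Rightarrow> real) \<Rightarrow> 'a \<Rightarrow> real" where
  "upper_limit T Y \<phi> z = Inf {Sup (\<phi> ` (Y \<inter> W)) | W. openin T W \<and> z \<in> W}"

lemma upper_limit_bounds:
  fixes \<phi> :: "'a \<Rightarrow> real"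
  assumes dense: "T closure_of Y = topspace T" and bounded: "bounded (\<phi> ` Y)"
    and W: "openin T W" "z \<in> W" and cd: "\<And>u. u \<in> Y \<inter> W \<Longrightarrow> c \<le> \<phi> u \<and> \<phi> u \<le> d"
  shows "c \<le> upper_limit T Y \<phi> z \<and> upper_limit T Y \<phi> z \<le> d"
proof
  have meets: "Y \<inter> W' \<noteq> {}" if "openin T W'" "z \<in> W'" for W'
    using dense that unfolding dense_intersects_open by blast
  obtain B where B: "\<And>u. u \<in> Y \<Longrightarrow> \<bar>\<phi> u\<bar> \<le> B"
    using bounded unfolding bounded_real by blast
  have le_Sup: "\<phi> u \<le> Sup (\<phi> ` (Y \<inter> W'))" if "u \<in> Y \<inter> W'" for u W'
  proof (rule cSup_upper)
    show "bdd_above (\<phi> ` (Y \<inter> W'))"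
      by (rule bdd_aboveI[of _ B]) (use B abs_le_D1 in blast)
  qed (use that in blast)
  have "upper_limit T Y \<phi> z \<le> Sup (\<phi> ` (Y \<inter> W))"
    unfolding upper_limit_def
  proof (rule cInf_lower)
    show "bdd_below {Sup (\<phi> ` (Y \<inter> W)) | W. openin T W \<and> z \<in> W}"
    proof (rule bdd_belowI[of _ "-B"], clarify)
      fix W' assume "openin T W'" "z \<in> W'"
      then obtain u where u: "u \<in> Y \<inter> W'" using meets by blast
      then have "-B \<le> \<phi> u" using B[of u] by (auto simp: abs_le_iff)
      then show "-B \<le> Sup (\<phi> ` (Y \<inter> W'))" using le_Sup[OF u] by linarith
    qed
  qed (use W in blast)
  also have "\<dots> \<le> d"
    by (rule cSup_least) (use meets[OF W] cd in blast)+
  finally show "upper_limit T Y \<phi> z \<le> d" .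
  show "c \<le> upper_limit T Y \<phi> z"
    unfolding upper_limit_def
  proof (rule cInf_greatest, use W in blast, clarify)
    fix W' assume "openin T W'" "z \<in> W'"
    then obtain u where u: "u \<in> Y \<inter> W" "u \<in> W'" using meets[of "W \<inter> W'"] W by blast
    then show "c \<le> Sup (\<phi> ` (Y \<inter> W'))" using le_Sup[of u W'] cd[OF u(1)] by simp
  qed
qed

lemma continuous_extension_vanishing_oscillation:
  fixes \<phi> :: "'a \<Rightarrow> real"
  assumes Y: "Y \<subseteq> topspace T" "T closure_of Y = topspace T"
    and bounded: "bounded (\<phi> ` Y)" and osc: "vanishing_oscillation T Y \<phi>"
  shows "continuous_map T euclideanreal (upper_limit T Y \<phi>)"
    and "\<And>u. u \<in> Y \<Longrightarrow> upper_limit T Y \<phi> u = \<phi> u"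
proof -
  let ?\<Phi> = "upper_limit T Y \<phi>"
  have near: "\<bar>?\<Phi> z - \<phi> u\<bar> \<le> e"
    if W: "openin T W" "z \<in> W" and u: "u \<in> Y \<inter> W"
      and small: "\<forall>u\<in>Y \<inter> W. \<forall>v\<in>Y \<inter> W. \<bar>\<phi> u - \<phi> v\<bar> \<le> e"
    for W z u e
    unfolding abs_diff_le_iff
  proof (rule upper_limit_bounds[OF Y(2) bounded W])
    fix v assume "v \<in> Y \<inter> W"
    then have "\<bar>\<phi> v - \<phi> u\<bar> \<le> e" using small u by blast
    then show "\<phi> u - e \<le> \<phi> v \<and> \<phi> v \<le> \<phi> u + e" by (simp only: abs_diff_le_iff)
  qed
  have small_nbhd: "\<exists>W. openin T W \<and> z \<in> W \<and> (\<forall>u\<in>Y \<inter> W. \<forall>v\<in>Y \<inter> W. \<bar>\<phi> u - \<phi> v\<bar> \<le> e)"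
    if "z \<in> topspace T" "e > 0" for z e
    using osc that unfolding vanishing_oscillation_def by blast
  show "?\<Phi> u = \<phi> u" if "u \<in> Y" for u
  proof (rule eq_iff_diff_eq_0[THEN iffD2], rule dense_eq0_I)
    fix e :: real assume "e > 0"
    have "u \<in> topspace T" using Y(1) \<open>u \<in> Y\<close> by blast
    then obtain W where W: "openin T W" "u \<in> W"
      and small: "\<forall>u\<in>Y \<inter> W. \<forall>v\<in>Y \<inter> W. \<bar>\<phi> u - \<phi> v\<bar> \<le> e"
      using small_nbhd[OF _ \<open>e > 0\<close>] by blast
    show "\<bar>?\<Phi> u - \<phi> u\<bar> \<le> e"
      by (rule near[OF W _ small]) (use \<open>u \<in> Y\<close> W in blast)
  qed
  have "continuous_map T Met_TC.mtopology ?\<Phi>"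
    unfolding Met_TC.continuous_map_to_metric mball_eq_ball
  proof (intro ballI allI impI)
    fix z and e :: real assume "z \<in> topspace T" "e > 0"
    then obtain W where W: "openin T W" "z \<in> W"
      and small: "\<forall>u\<in>Y \<inter> W. \<forall>v\<in>Y \<inter> W. \<bar>\<phi> u - \<phi> v\<bar> \<le> e/3"
      using small_nbhd[of z "e/3"] by auto
    obtain u where u: "u \<in> Y \<inter> W"
      using Y(2) W unfolding dense_intersects_open by blast
    have "?\<Phi> z' \<in> ball (?\<Phi> z) e" if "z' \<in> W" for z'
    proof -
      have "\<bar>?\<Phi> z' - \<phi> u\<bar> \<le> e/3" "\<bar>?\<Phi> z - \<phi> u\<bar> \<le> e/3"
        using near[OF W(1) that u small] near[OF W u small] by auto
      then show ?thesis
        using \<open>e > 0\<close> unfolding mem_ball dist_real_def by arith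
    qed
    with W show "\<exists>U. openin T U \<and> z \<in> U \<and> (\<forall>z'\<in>U. ?\<Phi> z' \<in> ball (?\<Phi> z) e)" by blast
  qed
  then show "continuous_map T euclideanreal ?\<Phi>" by simp
qed

section \<open>Open boxes in powers\<close>

definition box_supp :: "'a topology \<Rightarrow> ('i \<Rightarrow> 'a set) \<Rightarrow> 'i set" where
  "box_supp X V = {a. V a \<noteq> topspace X}"

definition open_box :: "'a topology \<Rightarrow> ('i \<Rightarrow> 'a set) \<Rightarrow> bool" where
  "open_box X V \<longleftrightarrow> (\<forall>a. openin X (V a)) \<and> finite (box_supp X V)"

lemma open_boxI:
  assumes "\<And>a. openin X (V a)" "finite S" "box_supp X V \<subseteq> S"
  shows "open_box X V"
  using assms finite_subset unfolding open_box_def by blast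

lemma open_box_Int:
  assumes "open_box X V" "open_box X W"
  shows "open_box X (\<lambda>a. V a \<inter> W a)"
proof (rule open_boxI)
  show "openin X (V a \<inter> W a)" for a
    using assms unfolding open_box_def by blast
  show "finite (box_supp X V \<union> box_supp X W)"
    using assms unfolding open_box_def by blast
qed (auto simp: box_supp_def)

lemma openin_open_box:
  "open_box X V \<Longrightarrow> openin (product_topology (\<lambda>_. X) UNIV) (Pi UNIV V)"
  unfolding open_box_def box_supp_def by (simp add: openin_PiE_gen flip: PiE_UNIV_domain)

lemma open_box_nbhd:
  assumes "openin (product_topology (\<lambda>_. X) UNIV) W" "z \<in> W"
  obtains V where "open_box X V" "z \<in> Pi UNIV V" "Pi UNIV V \<subseteq> W"
  using product_topology_open_contains_basis[OF assms]
  unfolding open_box_def box_supp_def by (auto simp: PiE_UNIV_domain)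

lemma open_box_reindex:
  assumes "open_box X V" "inj f"
  shows "open_box X (\<lambda>n. V (f n))"
proof (rule open_boxI)
  show "openin X (V (f n))" for n
    using assms(1) unfolding open_box_def by blast
  show "finite (f -` box_supp X V)"
    using assms unfolding open_box_def by (simp add: finite_vimageI)
qed (auto simp: box_supp_def)

lemma openin_power_nat_meets_dense_prefix:
  assumes D: "X closure_of D = topspace X" "d0 \<in> D" "D \<subseteq> topspace X"
    and W: "openin (product_topology (\<lambda>_::nat. X) UNIV) W" "s \<in> W"
  obtains k t where "t \<in> PiE {..<k} (\<lambda>_. D)" "(\<lambda>n. if n < k then t n else d0) \<in> W"
proof -
  obtain V where V: "open_box X V" "s \<in> Pi UNIV V" "Pi UNIV V \<subseteq> W"
    using open_box_nbhd W by blast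
  obtain k where k: "box_supp X V \<subseteq> {..<k}"
    using V(1) finite_nat_bounded unfolding open_box_def by blast
  have "D \<inter> V n \<noteq> {}" for n
    using D(1) V(1,2) unfolding dense_intersects_open open_box_def by blast
  then have t: "(SOME y. y \<in> D \<inter> V n) \<in> D \<inter> V n" for n
    by (metis some_in_eq)
  let ?t = "restrict (\<lambda>n. SOME y. y \<in> D \<inter> V n) {..<k}"
  have "(\<lambda>n. if n < k then ?t n else d0) \<in> Pi UNIV V"
  proof
    fix n show "(if n < k then ?t n else d0) \<in> V n"
    proof (cases "n < k")
      case False
      then have "V n = topspace X" using k unfolding box_supp_def by auto
      then show ?thesis using False D(2,3) by auto
    qed (use t in simp)
  qed
  moreover have "?t \<in> PiE {..<k} (\<lambda>_. D)" using t by auto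
  ultimately show thesis using that V(3) by blast
qed

lemma separable_space_power_nat:
  assumes "separable_space X"
  shows "separable_space (product_topology (\<lambda>_::nat. X) UNIV)"
proof (cases "topspace X = {}")
  case True
  then have "topspace (product_topology (\<lambda>_::nat. X) UNIV) = {}"
    by (simp add: PiE_eq_empty_iff)
  then show ?thesis
    unfolding separable_space_def by (metis closure_of_empty countable_empty order_refl)
next
  case False
  obtain D where D: "countable D" "D \<subseteq> topspace X" "X closure_of D = topspace X"
    using assms unfolding separable_space_def by blast
  have "D \<noteq> {}"
  proof
    assume "D = {}"
    then have "topspace X = {}" using D(3) by simp
    with False show False by blast
  qed
  then obtain d0 where d0: "d0 \<in> D" by blast
  define E where "E = (\<Union>k::nat. (\<lambda>t n. if n < k then t n else d0) ` PiE {..<k} (\<lambda>_. D))"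
  show ?thesis
    unfolding separable_space_def
  proof (intro exI conjI)
    show "countable E"
      unfolding E_def by (intro countable_UN countable_image countable_PiE finite_lessThan D(1)) simp
    show "E \<subseteq> topspace (product_topology (\<lambda>_::nat. X) UNIV)"
      unfolding E_def using D(2) d0 by (auto simp: PiE_iff)
    show "product_topology (\<lambda>_::nat. X) UNIV closure_of E = topspace (product_topology (\<lambda>_. X) UNIV)"
      unfolding dense_intersects_open
    proof (intro allI impI)
      fix W assume "openin (product_topology (\<lambda>_::nat. X) UNIV) W \<and> W \<noteq> {}"
      then obtain k t where "t \<in> PiE {..<k} (\<lambda>_. D)" "(\<lambda>n. if n < k then t n else d0) \<in> W"
        using openin_power_nat_meets_dense_prefix[OF D(3) d0 D(2)] by (metis ex_in_conv)
      then show "E \<inter> W \<noteq> {}"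
        unfolding E_def by blast
    qed
  qed
qed

section \<open>Subsets of a power that project onto every countable subpower\<close>

(* The only property of a Korovin orbit that the argument uses. *)
locale omega_dense =
  fixes X :: "'a topology" and Y :: "('i \<Rightarrow> 'a) set"
  assumes subset_topspace: "Y \<subseteq> topspace (product_topology (\<lambda>_. X) UNIV)"
    and agree_on_countable:
      "\<And>M t. countable M \<Longrightarrow> (\<And>a. a \<in> M \<Longrightarrow> t a \<in> topspace X) \<Longrightarrow> \<exists>u\<in>Y. \<forall>a\<in>M. u a = t a"
begin

abbreviation XI where "XI \<equiv> product_topology (\<lambda>_::'i. X) UNIV"

lemma mem_topspace: "u \<in> Y \<Longrightarrow> u a \<in> topspace X"
  using subset_topspace by (auto simp: PiE_UNIV_domain)

lemma open_meets_agreeing: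
  assumes "openin XI W" "t \<in> W" "countable M"
  obtains u where "u \<in> Y" "u \<in> W" "\<And>a. a \<in> M \<Longrightarrow> u a = t a"
proof -
  obtain V where V: "open_box X V" "t \<in> Pi UNIV V" "Pi UNIV V \<subseteq> W"
    using open_box_nbhd assms(1,2) by blast
  have "t \<in> topspace XI"
    using assms(1,2) openin_subset by blast
  then have "t a \<in> topspace X" for a
    by (simp add: PiE_UNIV_domain Pi_iff)
  moreover have "countable (M \<union> box_supp X V)"
    using V(1) assms(3) unfolding open_box_def by (simp add: countable_finite)
  ultimately obtain u where u: "u \<in> Y" "\<forall>a\<in>M \<union> box_supp X V. u a = t a"
    using agree_on_countable[of "M \<union> box_supp X V" t] by blast
  have "u \<in> Pi UNIV V"
  proof
    fix a show "u a \<in> V a"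
      using u V(2) mem_topspace[OF u(1)] unfolding box_supp_def
      by (cases "V a = topspace X") auto
  qed
  show thesis
  proof (rule that[OF u(1)])
    show "u \<in> W" using \<open>u \<in> Pi UNIV V\<close> V(3) by blast
  qed (use u(2) in blast)
qed

lemma closure_of_eq_topspace: "XI closure_of Y = topspace XI"
  unfolding dense_intersects_open
proof (intro allI impI)
  fix W assume "openin XI W \<and> W \<noteq> {}"
  then obtain t where "openin XI W" "t \<in> W" by blast
  then obtain u where "u \<in> Y" "u \<in> W" using open_meets_agreeing[of W t "{}"] by auto
  then show "Y \<inter> W \<noteq> {}" by blast
qed

lemma open_box_meets:
  assumes "open_box X V" "\<And>a. V a \<noteq> {}"
  obtains u where "u \<in> Y" "u \<in> Pi UNIV V"
  using open_meets_agreeing[OF openin_open_box[OF assms(1)], of "\<lambda>a. SOME x. x \<in> V a" "{}"] assms(2)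
  by (auto simp: some_in_eq)

lemma continuous_map_slice:
  assumes "p \<in> Y"
  shows "continuous_map X XI (\<lambda>y. p(i := y))"
  using mem_topspace[OF assms] by (auto simp: continuous_map_componentwise_UNIV)

lemma slice_in_closure:
  assumes "p \<in> Y" "y \<in> F" "F \<subseteq> topspace X"
  shows "p(i := y) \<in> XI closure_of {u \<in> Y. u i \<in> F}"
  unfolding in_closure_of
proof (intro conjI allI impI)
  show "p(i := y) \<in> topspace XI"
    using continuous_map_image_subset_topspace[OF continuous_map_slice[OF assms(1)]] assms(2,3)
    by blast
  fix W assume "p(i := y) \<in> W \<and> openin XI W"
  then obtain u where "u \<in> Y" "u \<in> W" "u i = y"
    using open_meets_agreeing[of W "p(i := y)" "{i}"] by auto
  then show "\<exists>u. u \<in> {u \<in> Y. u i \<in> F} \<and> u \<in> W" using assms(2) by auto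
qed

lemma completely_regular_space_factor:
  assumes reg: "completely_regular_space (subtopology XI Y)"
    and osc: "\<And>\<phi>. continuous_map (subtopology XI Y) euclideanreal \<phi> \<Longrightarrow> vanishing_oscillation XI Y \<phi>"
  shows "completely_regular_space X"
  unfolding completely_regular_space_alt
proof (intro allI impI)
  fix F x assume F: "closedin X F" and x: "x \<in> topspace X - F"
  fix i :: 'i
  have "(\<lambda>_. x) \<in> topspace XI"
    using x by (simp add: PiE_UNIV_domain)
  then obtain p where p: "p \<in> Y" "p i = x"
    using open_meets_agreeing[OF openin_topspace, of "\<lambda>_. x" "{i}"] by auto
  let ?C = "{u \<in> Y. u i \<in> F}"
  have top: "topspace (subtopology XI Y) = Y"
    using subset_topspace by auto
  have "continuous_map (subtopology XI Y) X (\<lambda>u. u i)"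
    by (intro continuous_map_from_subtopology continuous_map_product_projection) simp
  then have C: "closedin (subtopology XI Y) ?C"
    using closedin_continuous_map_preimage[OF _ F] top by fastforce
  have pC: "p \<in> topspace (subtopology XI Y) - ?C"
    using p x top by auto
  obtain \<psi> where \<psi>: "continuous_map (subtopology XI Y) (top_of_set {0..1}) \<psi>"
    "\<psi> p = 0" "\<psi> ` ?C \<subseteq> {1::real}"
    using reg[unfolded completely_regular_space_def, rule_format, OF conjI[OF C pC]] by blast
  have "continuous_map (subtopology XI Y) euclideanreal \<psi>"
    using \<psi>(1) continuous_map_in_subtopology by blast
  then have "vanishing_oscillation XI Y \<psi>" by (rule osc)
  moreover have "bounded (\<psi> ` Y)"
    using continuous_map_image_subset_topspace[OF \<psi>(1)] top
    by (auto intro: bounded_subset[OF bounded_closed_interval])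
  ultimately have \<Phi>: "continuous_map XI euclideanreal (upper_limit XI Y \<psi>)"
    "\<And>u. u \<in> Y \<Longrightarrow> upper_limit XI Y \<psi> u = \<psi> u"
    using continuous_extension_vanishing_oscillation[OF subset_topspace closure_of_eq_topspace]
    by blast+
  let ?h = "\<lambda>y. upper_limit XI Y \<psi> (p(i := y))"
  have "XI closure_of ?C \<subseteq> {z \<in> topspace XI. upper_limit XI Y \<psi> z \<in> {1}}"
  proof (rule closure_of_minimal)
    show "?C \<subseteq> {z \<in> topspace XI. upper_limit XI Y \<psi> z \<in> {1}}"
      using \<psi>(3) \<Phi>(2) subset_topspace by auto
  qed (use closedin_continuous_map_preimage[OF \<Phi>(1), of "{1}"] in simp)
  then have "?h ` F \<subseteq> {1}"
    using slice_in_closure[OF p(1) _ closedin_subset[OF F]] by blast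
  moreover have "?h x = 0"
    using p \<psi>(2) \<Phi>(2) by (metis fun_upd_triv)
  moreover have "continuous_map X euclideanreal ?h"
    using continuous_map_compose[OF continuous_map_slice[OF p(1)] \<Phi>(1)] by (simp add: comp_def)
  ultimately show "\<exists>h. continuous_map X euclideanreal h \<and> h x = 0 \<and> h ` F \<subseteq> {1}"
    by blast
qed
end

lemma korovin_orbit_omega_dense:
  fixes f :: "'g::ab_group_add \<Rightarrow> 'a"
  assumes "korovin_mapping X f"
  shows "omega_dense X (korovin_orbit f)"
proof
  show "korovin_orbit f \<subseteq> topspace (product_topology (\<lambda>_. X) UNIV)"
    using assms unfolding korovin_mapping_def korovin_orbit_def by (auto simp: PiE_UNIV_domain)
  fix M :: "'g set" and t :: "'g \<Rightarrow> 'a" assume "countable M" "\<And>a. a \<in> M \<Longrightarrow> t a \<in> topspace X"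
  then have "restrict t M \<in> (\<lambda>h. restrict h M) ` korovin_orbit f"
    using assms unfolding korovin_mapping_def by auto
  then obtain u where "u \<in> korovin_orbit f" "restrict u M = restrict t M" by auto
  then show "\<exists>u\<in>korovin_orbit f. \<forall>a\<in>M. u a = t a"
    by (metis restrict_apply')
qed

section \<open>Oscillation of continuous functions on such subsets\<close>

locale omega_dense_continuous = omega_dense X Y for X :: "'a topology" and Y :: "('i \<Rightarrow> 'a) set" +
  fixes \<phi> :: "('i \<Rightarrow> 'a) \<Rightarrow> real"
  assumes continuous: "continuous_map (subtopology (product_topology (\<lambda>_. X) UNIV) Y) euclideanreal \<phi>"
begin

lemma box_nbhd_small_variation:
  assumes "q \<in> Y" "r > 0"
  obtains T where "open_box X T" "q \<in> Pi UNIV T"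
    "\<And>u. u \<in> Y \<Longrightarrow> u \<in> Pi UNIV T \<Longrightarrow> \<bar>\<phi> u - \<phi> q\<bar> < r"
proof -
  let ?V = "{u \<in> topspace (subtopology XI Y). \<phi> u \<in> ball (\<phi> q) r}"
  have "openin (subtopology XI Y) ?V"
    using openin_continuous_map_preimage[OF continuous, of "ball (\<phi> q) r"] by simp
  then obtain W where W: "openin XI W" "?V = W \<inter> Y"
    by (auto simp: openin_subtopology)
  have "q \<in> ?V" using assms subset_topspace by auto
  then have "q \<in> W" using W(2) by blast
  then obtain T where T: "open_box X T" "q \<in> Pi UNIV T" "Pi UNIV T \<subseteq> W"
    using open_box_nbhd W(1) by blast
  show thesis
  proof (rule that[OF T(1,2)])
    fix u assume "u \<in> Y" "u \<in> Pi UNIV T"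
    then have "u \<in> ?V" using T(3) W(2) by blast
    then show "\<bar>\<phi> u - \<phi> q\<bar> < r" by (simp add: dist_real_def abs_minus_commute)
  qed
qed

lemma vanishing_oscillation_if_countably_determined:
  assumes det: "\<And>e. e > 0 \<Longrightarrow>
    \<exists>M. countable M \<and> (\<forall>q\<in>Y. \<forall>q'\<in>Y. (\<forall>a\<in>M. q a = q' a) \<longrightarrow> \<bar>\<phi> q - \<phi> q'\<bar> \<le> e)"
  shows "vanishing_oscillation XI Y \<phi>"
  unfolding vanishing_oscillation_def
proof (intro ballI allI impI)
  fix z and e :: real assume z: "z \<in> topspace XI" and "e > 0"
  then obtain M where M: "countable M"
    and dep: "\<forall>q\<in>Y. \<forall>q'\<in>Y. (\<forall>a\<in>M. q a = q' a) \<longrightarrow> \<bar>\<phi> q - \<phi> q'\<bar> \<le> e/4"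
    using det[of "e/4"] by auto
  obtain w where w: "w \<in> Y" "w \<in> topspace XI" "\<And>a. a \<in> M \<Longrightarrow> w a = z a"
    using open_meets_agreeing[OF openin_topspace z M] by metis
  obtain B where B: "open_box X B" "w \<in> Pi UNIV B"
    and B_small: "\<And>u. u \<in> Y \<Longrightarrow> u \<in> Pi UNIV B \<Longrightarrow> \<bar>\<phi> u - \<phi> w\<bar> < e/4"
    using box_nbhd_small_variation[OF w(1), of "e/4"] \<open>e > 0\<close> by auto
  define B' where "B' a = (if a \<in> M then B a else topspace X)" for a
  have B': "open_box X B'"
  proof (rule open_boxI)
    show "openin X (B' a)" for a
      using B(1) unfolding B'_def open_box_def by simp
    show "box_supp X B' \<subseteq> box_supp X B"
      unfolding B'_def box_supp_def by auto
  qed (use B(1) in \<open>simp add: open_box_def\<close>)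
  have "z \<in> Pi UNIV B'"
  proof
    fix a
    have "z a \<in> topspace X" "w a \<in> B a"
      using z B(2) by (auto simp: PiE_UNIV_domain)
    then show "z a \<in> B' a" using w(3)[of a] unfolding B'_def by auto
  qed
  have near: "\<bar>\<phi> q - \<phi> w\<bar> < e/2" if q: "q \<in> Y" "q \<in> Pi UNIV B'" for q
  proof -
    have t: "(\<lambda>a. if a \<in> M then q a else w a) \<in> Pi UNIV B"
    proof
      fix a
      have "q a \<in> B' a" "w a \<in> B a" using Pi_mem[OF q(2)] Pi_mem[OF B(2)] by auto
      then show "(if a \<in> M then q a else w a) \<in> B a" unfolding B'_def by auto
    qed
    obtain u where u: "u \<in> Y" "u \<in> Pi UNIV B"
      and agree: "\<And>a. a \<in> M \<Longrightarrow> u a = (if a \<in> M then q a else w a)"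
      using open_meets_agreeing[OF openin_open_box[OF B(1)] t M] by metis
    have "\<bar>\<phi> u - \<phi> q\<bar> \<le> e/4" using dep u(1) q(1) agree by simp
    moreover have "\<bar>\<phi> u - \<phi> w\<bar> < e/4" using B_small u(1,2) .
    ultimately show ?thesis by arith
  qed
  show "\<exists>W. openin XI W \<and> z \<in> W \<and> (\<forall>u\<in>Y \<inter> W. \<forall>v\<in>Y \<inter> W. \<bar>\<phi> u - \<phi> v\<bar> \<le> e)"
  proof (intro exI conjI ballI)
    show "openin XI (Pi UNIV B')" by (rule openin_open_box[OF B'])
    show "z \<in> Pi UNIV B'" by fact
    fix u v assume "u \<in> Y \<inter> Pi UNIV B'" "v \<in> Y \<inter> Pi UNIV B'"
    then have "\<bar>\<phi> u - \<phi> w\<bar> < e/2" "\<bar>\<phi> v - \<phi> w\<bar> < e/2" using near by auto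
    then show "\<bar>\<phi> u - \<phi> v\<bar> \<le> e" by arith
  qed
qed

lemma diagonal_eventually_close:
  assumes w: "w \<in> Y" "\<And>a. a \<in> (\<Union>n. S n) \<Longrightarrow> w a = z a"
    and \<gamma>: "\<And>a U. openin X U \<Longrightarrow> z a \<in> U \<Longrightarrow> \<forall>\<^sub>F n in sequentially. \<gamma> a n \<subseteq> U"
    and S: "incseq S" "\<And>n. finite (S n)"
    and q: "\<And>n. q n \<in> Y" "\<And>n a. a \<in> S n \<Longrightarrow> q n a \<in> \<gamma> a n"
    and T: "\<And>n. open_box X (T n)" "\<And>n. q n \<in> Pi UNIV (T n)" "\<And>n. box_supp X (T n) \<subseteq> S (Suc n)"
      "\<And>n u. u \<in> Y \<Longrightarrow> u \<in> Pi UNIV (T n) \<Longrightarrow> \<bar>\<phi> u - \<phi> (q n)\<bar> < r"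
    and "r > 0"
  shows "\<forall>\<^sub>F n in sequentially. \<bar>\<phi> (q n) - \<phi> w\<bar> < 2 * r"
proof -
  obtain B where B: "open_box X B" "w \<in> Pi UNIV B"
    and B_small: "\<And>u. u \<in> Y \<Longrightarrow> u \<in> Pi UNIV B \<Longrightarrow> \<bar>\<phi> u - \<phi> w\<bar> < r"
    using box_nbhd_small_variation[OF w(1) \<open>r > 0\<close>] by metis
  let ?A = "box_supp X B \<inter> (\<Union>n. S n)"
  have "finite ?A" using B(1) unfolding open_box_def by blast
  then obtain k where k: "?A \<subseteq> S k"
    using finite_subset_incseq_Union[OF S(1)] by (metis inf_le2)
  have "\<forall>\<^sub>F n in sequentially. \<forall>a\<in>?A. \<gamma> a n \<subseteq> B a"
  proof (rule eventually_ball_finite[OF \<open>finite ?A\<close>], rule ballI)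
    fix a assume "a \<in> ?A"
    then have "w a = z a" using w(2) by blast
    then have "z a \<in> B a" using B(2) by (metis Pi_mem UNIV_I)
    then show "\<forall>\<^sub>F n in sequentially. \<gamma> a n \<subseteq> B a"
      using \<gamma> B(1) unfolding open_box_def by blast
  qed
  moreover have "\<forall>\<^sub>F n in sequentially. k \<le> n" by (rule eventually_ge_at_top)
  ultimately show ?thesis
  proof eventually_elim
    case (elim n)
    let ?t = "\<lambda>a. if a \<in> S (Suc n) then q n a else w a"
    have "?t a \<in> T n a \<inter> B a" for a
    proof (cases "a \<in> S (Suc n)")
      case True
      have "q n a \<in> B a"
      proof (cases "a \<in> box_supp X B")
        case True
        then have "a \<in> S n" using \<open>a \<in> S (Suc n)\<close> k monoD[OF S(1) elim(2)] by blast
        then show ?thesis using q(2) elim(1) True \<open>a \<in> S (Suc n)\<close> by blast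
      qed (use mem_topspace[OF q(1)] in \<open>simp add: box_supp_def\<close>)
      then show ?thesis using True T(2) by auto
    next
      case False
      then have "T n a = topspace X" using T(3) unfolding box_supp_def by blast
      then show ?thesis using False B(2) mem_topspace[OF w(1)] by auto
    qed
    then have "?t \<in> Pi UNIV (\<lambda>a. T n a \<inter> B a)" by blast
    then obtain u where u: "u \<in> Y" "u \<in> Pi UNIV (\<lambda>a. T n a \<inter> B a)"
      using open_meets_agreeing[OF openin_open_box[OF open_box_Int[OF T(1)[of n] B(1)]] _ countable_empty]
      by metis
    then have "u \<in> Pi UNIV (T n)" "u \<in> Pi UNIV B" by (auto simp: Pi_iff)
    then have "\<bar>\<phi> u - \<phi> (q n)\<bar> < r" "\<bar>\<phi> u - \<phi> w\<bar> < r"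
      using T(4) B_small u(1) by auto
    then show ?case by arith
  qed
qed

lemma basic_nbhd_small_oscillation:
  assumes z: "z \<in> topspace XI" and "e > 0"
    and \<gamma>: "\<And>a U. openin X U \<Longrightarrow> z a \<in> U \<Longrightarrow> \<forall>\<^sub>F n in sequentially. \<gamma> a n \<subseteq> U"
  shows "\<exists>S n. finite S \<and>
    (\<forall>q\<in>Y. \<forall>q'\<in>Y. (\<forall>a\<in>S. q a \<in> \<gamma> a n \<and> q' a \<in> \<gamma> a n) \<longrightarrow> \<bar>\<phi> q - \<phi> q'\<bar> \<le> e)"
proof (rule ccontr)
  \<comment> \<open>Finite sets S 0 \<subseteq> S 1 \<subseteq> \<dots> absorb the supports of small-variation boxes around the bad
    pairs in the basic neighbourhoods given by S n; a point of Y agreeing with z on all of them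
    is then close to both points of the n-th bad pair for large n.\<close>
  assume no_small: "\<not> ?thesis"
  have "\<forall>S n. finite S \<longrightarrow> (\<exists>q q'. q \<in> Y \<and> q' \<in> Y \<and>
      (\<forall>a\<in>S. q a \<in> \<gamma> a n \<and> q' a \<in> \<gamma> a n) \<and> e < \<bar>\<phi> q - \<phi> q'\<bar>)"
  proof (intro allI impI)
    fix S :: "'i set" and n :: nat assume "finite S"
    with no_small have "\<not> (\<forall>q\<in>Y. \<forall>q'\<in>Y.
        (\<forall>a\<in>S. q a \<in> \<gamma> a n \<and> q' a \<in> \<gamma> a n) \<longrightarrow> \<bar>\<phi> q - \<phi> q'\<bar> \<le> e)"
      by blast
    then show "\<exists>q q'. q \<in> Y \<and> q' \<in> Y \<and>
        (\<forall>a\<in>S. q a \<in> \<gamma> a n \<and> q' a \<in> \<gamma> a n) \<and> e < \<bar>\<phi> q - \<phi> q'\<bar>"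
      by (auto simp: not_le)
  qed
  then obtain q q' where qq: "\<And>S n. finite S \<Longrightarrow> q S n \<in> Y \<and> q' S n \<in> Y \<and>
      (\<forall>a\<in>S. q S n a \<in> \<gamma> a n \<and> q' S n a \<in> \<gamma> a n) \<and> e < \<bar>\<phi> (q S n) - \<phi> (q' S n)\<bar>"
    by metis
  have "e/4 > 0" using \<open>e > 0\<close> by simp
  then have "\<exists>T. open_box X T \<and> p \<in> Pi UNIV T \<and> (\<forall>u\<in>Y. u \<in> Pi UNIV T \<longrightarrow> \<bar>\<phi> u - \<phi> p\<bar> < e/4)"
    if "p \<in> Y" for p
    using box_nbhd_small_variation[OF that] by metis
  then obtain T where T: "\<And>p. p \<in> Y \<Longrightarrow>
      open_box X (T p) \<and> p \<in> Pi UNIV (T p) \<and> (\<forall>u\<in>Y. u \<in> Pi UNIV (T p) \<longrightarrow> \<bar>\<phi> u - \<phi> p\<bar> < e/4)"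
    by metis
  define S where "S = rec_nat {} (\<lambda>n S. S \<union> box_supp X (T (q S n)) \<union> box_supp X (T (q' S n)))"
  have S_Suc: "S (Suc n) = S n \<union> box_supp X (T (q (S n) n)) \<union> box_supp X (T (q' (S n) n))" for n
    by (simp add: S_def)
  have finite_S: "finite (S n)" for n
  proof (induction n)
    case (Suc n)
    then show ?case using qq[OF Suc] T unfolding S_Suc open_box_def by simp
  qed (simp add: S_def)
  have "incseq S" by (rule incseq_SucI) (auto simp: S_Suc)
  have "countable (\<Union>n. S n)" using finite_S by (simp add: countable_finite)
  then obtain w where w: "w \<in> Y" "\<And>a. a \<in> (\<Union>n. S n) \<Longrightarrow> w a = z a"
    using open_meets_agreeing[OF openin_topspace z] by metis
  have close: "\<forall>\<^sub>F n in sequentially. \<bar>\<phi> (p (S n) n) - \<phi> w\<bar> < 2 * (e/4)"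
    if p: "\<And>S n. finite S \<Longrightarrow> p S n \<in> Y \<and> (\<forall>a\<in>S. p S n a \<in> \<gamma> a n)"
      and supp: "\<And>n. box_supp X (T (p (S n) n)) \<subseteq> S (Suc n)" for p
  proof (rule diagonal_eventually_close[OF w \<gamma> \<open>incseq S\<close> finite_S])
    show "p (S n) n \<in> Y" for n
      using p finite_S by blast
    show "p (S n) n a \<in> \<gamma> a n" if "a \<in> S n" for n a
      using p finite_S that by blast
    show "open_box X (T (p (S n) n))" "p (S n) n \<in> Pi UNIV (T (p (S n) n))" for n
      using T p finite_S by blast+
    show "\<bar>\<phi> u - \<phi> (p (S n) n)\<bar> < e/4" if "u \<in> Y" "u \<in> Pi UNIV (T (p (S n) n))" for n u
      using T p finite_S that by blast
  qed (use supp \<open>e/4 > 0\<close> in auto)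
  have "\<forall>\<^sub>F n in sequentially. \<bar>\<phi> (q (S n) n) - \<phi> w\<bar> < 2 * (e/4)"
    by (rule close) (use qq S_Suc in auto)
  moreover have "\<forall>\<^sub>F n in sequentially. \<bar>\<phi> (q' (S n) n) - \<phi> w\<bar> < 2 * (e/4)"
    by (rule close) (use qq S_Suc in auto)
  ultimately have "\<forall>\<^sub>F n in sequentially. False"
  proof eventually_elim
    case (elim n)
    then show ?case using qq[of "S n" n, OF finite_S] by arith
  qed
  then show False by simp
qed

lemma vanishing_oscillation_if_first_countable:
  assumes "first_countable X"
  shows "vanishing_oscillation XI Y \<phi>"
  unfolding vanishing_oscillation_def
proof (intro ballI allI impI)
  fix z and e :: real assume z: "z \<in> topspace XI" and "e > 0"
  then have za: "z a \<in> topspace X" for a by (simp add: PiE_UNIV_domain Pi_iff)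
  obtain \<gamma> where \<gamma>: "\<And>x n. x \<in> topspace X \<Longrightarrow> openin X (\<gamma> x n)" "\<And>x n. x \<in> topspace X \<Longrightarrow> x \<in> \<gamma> x n"
    and \<gamma>_base: "\<And>x U. openin X U \<Longrightarrow> x \<in> U \<Longrightarrow> \<forall>\<^sub>F n in sequentially. \<gamma> x n \<subseteq> U"
    using first_countable_nbhd_sequences[OF assms] by metis
  obtain S n where "finite S" and small:
    "\<forall>q\<in>Y. \<forall>q'\<in>Y. (\<forall>a\<in>S. q a \<in> \<gamma> (z a) n \<and> q' a \<in> \<gamma> (z a) n) \<longrightarrow> \<bar>\<phi> q - \<phi> q'\<bar> \<le> e"
    using basic_nbhd_small_oscillation[OF z \<open>e > 0\<close>, of "\<lambda>a. \<gamma> (z a)"] \<gamma>_base by blast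
  define W where "W = Pi UNIV (\<lambda>a. if a \<in> S then \<gamma> (z a) n else topspace X)"
  have "open_box X (\<lambda>a. if a \<in> S then \<gamma> (z a) n else topspace X)"
    by (rule open_boxI[OF _ \<open>finite S\<close>]) (auto simp: \<gamma>(1) za box_supp_def)
  then have "openin XI W" unfolding W_def by (rule openin_open_box)
  moreover have "z \<in> W"
    unfolding W_def using za \<gamma>(2) by (auto simp: PiE_UNIV_domain)
  moreover have "u a \<in> \<gamma> (z a) n" if "u \<in> W" "a \<in> S" for u a
    using Pi_mem[OF that(1)[unfolded W_def] UNIV_I, of a] that(2) by simp
  then have "\<bar>\<phi> u - \<phi> v\<bar> \<le> e" if "u \<in> Y \<inter> W" "v \<in> Y \<inter> W" for u v
    using small that by blast
  ultimately show "\<exists>W. openin XI W \<and> z \<in> W \<and> (\<forall>u\<in>Y \<inter> W. \<forall>v\<in>Y \<inter> W. \<bar>\<phi> u - \<phi> v\<bar> \<le> e)"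
    by blast
qed

(* A witness that \<phi> is not determined up to e by the coordinates in M. *)
definition separating_pair :: "real \<Rightarrow> 'i set \<Rightarrow> ('i \<Rightarrow> 'a set) \<times> ('i \<Rightarrow> 'a set) \<Rightarrow> bool" where
  "separating_pair e M P \<longleftrightarrow>
     open_box X (fst P) \<and> open_box X (snd P) \<and> (\<forall>a. fst P a \<noteq> {} \<and> snd P a \<noteq> {}) \<and>
     (\<forall>a\<in>M. fst P a = snd P a) \<and>
     (\<forall>u\<in>Y. \<forall>v\<in>Y. u \<in> Pi UNIV (fst P) \<longrightarrow> v \<in> Pi UNIV (snd P) \<longrightarrow> e < \<bar>\<phi> u - \<phi> v\<bar>)"

definition pair_supp :: "('i \<Rightarrow> 'a set) \<times> ('i \<Rightarrow> 'a set) \<Rightarrow> 'i set" where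
  "pair_supp P = box_supp X (fst P) \<union> box_supp X (snd P)"

lemma separating_pair_antimono: "separating_pair e M P \<Longrightarrow> M' \<subseteq> M \<Longrightarrow> separating_pair e M' P"
  unfolding separating_pair_def by blast

lemma finite_pair_supp: "separating_pair e M P \<Longrightarrow> finite (pair_supp P)"
  unfolding separating_pair_def pair_supp_def open_box_def by blast

lemma pair_supp_not_subset:
  assumes "separating_pair e M P" "0 \<le> e"
  shows "\<not> pair_supp P \<subseteq> M"
proof
  assume "pair_supp P \<subseteq> M"
  then have "fst P a = snd P a" for a
    using assms(1) unfolding separating_pair_def pair_supp_def box_supp_def by (cases "a \<in> M") auto
  moreover obtain u where "u \<in> Y" "u \<in> Pi UNIV (fst P)"
    using open_box_meets assms(1) unfolding separating_pair_def by metis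
  moreover have "\<forall>u\<in>Y. \<forall>v\<in>Y. u \<in> Pi UNIV (fst P) \<longrightarrow> v \<in> Pi UNIV (snd P) \<longrightarrow> e < \<bar>\<phi> u - \<phi> v\<bar>"
    using assms(1) unfolding separating_pair_def by blast
  ultimately have "e < \<bar>\<phi> u - \<phi> u\<bar>" by (metis ext)
  then show False using assms(2) by simp
qed

lemma separating_pair_exists:
  assumes q: "q \<in> Y" "q' \<in> Y" "\<And>a. a \<in> M \<Longrightarrow> q a = q' a" and gap: "e < \<bar>\<phi> q - \<phi> q'\<bar>"
  obtains P where "separating_pair e M P"
proof -
  define r where "r = (\<bar>\<phi> q - \<phi> q'\<bar> - e) / 2"
  have "r > 0" using gap unfolding r_def by simp
  obtain T where T: "open_box X T" "q \<in> Pi UNIV T"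
    and T_small: "\<And>u. u \<in> Y \<Longrightarrow> u \<in> Pi UNIV T \<Longrightarrow> \<bar>\<phi> u - \<phi> q\<bar> < r"
    using box_nbhd_small_variation[OF q(1) \<open>r > 0\<close>] by metis
  obtain T' where T': "open_box X T'" "q' \<in> Pi UNIV T'"
    and T'_small: "\<And>u. u \<in> Y \<Longrightarrow> u \<in> Pi UNIV T' \<Longrightarrow> \<bar>\<phi> u - \<phi> q'\<bar> < r"
    using box_nbhd_small_variation[OF q(2) \<open>r > 0\<close>] by metis
  define V where "V a = (if a \<in> M then T a \<inter> T' a else T a)" for a
  define V' where "V' a = (if a \<in> M then T a \<inter> T' a else T' a)" for a
  have supp: "finite (box_supp X T \<union> box_supp X T')"
    using T(1) T'(1) unfolding open_box_def by blast
  have opn: "openin X (T a)" "openin X (T' a)" for a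
    using T(1) T'(1) unfolding open_box_def by blast+
  have q_in: "q a \<in> T a" "q' a \<in> T' a" for a
    using Pi_mem[OF T(2)] Pi_mem[OF T'(2)] by auto
  show thesis
  proof (rule that[of "(V, V')"], unfold separating_pair_def fst_conv snd_conv, intro conjI ballI allI impI)
    show "open_box X V"
      by (rule open_boxI[OF _ supp]) (auto simp: V_def box_supp_def opn)
    show "open_box X V'"
      by (rule open_boxI[OF _ supp]) (auto simp: V'_def box_supp_def opn)
    show "V a \<noteq> {}" "V' a \<noteq> {}" for a
      using q_in q(3) unfolding V_def V'_def by (cases "a \<in> M"; force)+
    show "V a = V' a" if "a \<in> M" for a
      using that unfolding V_def V'_def by simp
    fix u v assume uv: "u \<in> Y" "v \<in> Y" "u \<in> Pi UNIV V" "v \<in> Pi UNIV V'"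
    have "Pi UNIV V \<subseteq> Pi UNIV T" "Pi UNIV V' \<subseteq> Pi UNIV T'"
      by (intro Pi_mono; simp add: V_def V'_def)+
    then have "u \<in> Pi UNIV T" "v \<in> Pi UNIV T'"
      using uv(3,4) by (auto dest: subsetD)
    then have "\<bar>\<phi> u - \<phi> q\<bar> < r" "\<bar>\<phi> v - \<phi> q'\<bar> < r"
      using T_small[OF uv(1)] T'_small[OF uv(2)] by auto
    moreover have "\<bar>\<phi> q - \<phi> q'\<bar> = e + 2 * r" unfolding r_def by (simp add: field_simps)
    ultimately show "e < \<bar>\<phi> u - \<phi> v\<bar>" by arith
  qed
qed

lemma pair_supp_meets_box_supp:
  assumes P: "separating_pair e R P" and T: "open_box X T" "w \<in> Y" "w \<in> Pi UNIV T"
    and T_small: "\<And>u. u \<in> Y \<Longrightarrow> u \<in> Pi UNIV T \<Longrightarrow> \<bar>\<phi> u - \<phi> w\<bar> < e/2"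
    and meets: "\<And>a. a \<in> R \<Longrightarrow> fst P a \<inter> T a \<noteq> {}"
  shows "box_supp X T \<inter> (pair_supp P - R) \<noteq> {}"
proof
  assume disj: "box_supp X T \<inter> (pair_supp P - R) = {}"
  from P have Pbox: "open_box X (fst P)" "open_box X (snd P)"
    and Pne: "\<And>a. fst P a \<noteq> {} \<and> snd P a \<noteq> {}"
    and Pagree: "\<And>a. a \<in> R \<Longrightarrow> fst P a = snd P a"
    and Psep: "\<And>u v. u \<in> Y \<Longrightarrow> v \<in> Y \<Longrightarrow> u \<in> Pi UNIV (fst P) \<Longrightarrow> v \<in> Pi UNIV (snd P) \<Longrightarrow>
                 e < \<bar>\<phi> u - \<phi> v\<bar>"
    unfolding separating_pair_def by blast+
  have "fst P a \<inter> T a \<noteq> {} \<and> snd P a \<inter> T a \<noteq> {}" for a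
  proof (cases "a \<in> R")
    case True
    then show ?thesis using meets Pagree by metis
  next
    case False
    then have "a \<notin> box_supp X T \<or> a \<notin> pair_supp P" using disj by blast
    then show ?thesis
    proof
      assume "a \<notin> box_supp X T"
      moreover have "fst P a \<subseteq> topspace X" "snd P a \<subseteq> topspace X"
        using Pbox openin_subset unfolding open_box_def by blast+
      ultimately show ?thesis using Pne[of a] unfolding box_supp_def by auto
    next
      assume "a \<notin> pair_supp P"
      then have "fst P a = topspace X" "snd P a = topspace X"
        unfolding pair_supp_def box_supp_def by auto
      then show ?thesis using Pi_mem[OF T(3) UNIV_I, of a] mem_topspace[OF T(2), of a] by blast
    qed
  qed
  then obtain u v where u: "u \<in> Y" "u \<in> Pi UNIV (\<lambda>a. fst P a \<inter> T a)"
    and v: "v \<in> Y" "v \<in> Pi UNIV (\<lambda>a. snd P a \<inter> T a)"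
    using open_box_meets[OF open_box_Int[OF Pbox(1) T(1)]]
      open_box_meets[OF open_box_Int[OF Pbox(2) T(1)]] by metis
  have "u \<in> Pi UNIV (fst P)" "u \<in> Pi UNIV T" "v \<in> Pi UNIV (snd P)" "v \<in> Pi UNIV T"
    using u(2) v(2) by (auto simp: Pi_iff)
  then have "e < \<bar>\<phi> u - \<phi> v\<bar>" "\<bar>\<phi> u - \<phi> w\<bar> < e/2" "\<bar>\<phi> v - \<phi> w\<bar> < e/2"
    using Psep[OF u(1) v(1)] T_small u(1) v(1) by auto
  then show False by arith
qed

lemma locally_finite_traces:
  fixes en :: "nat \<Rightarrow> 'i"
  assumes en: "inj en" and "e > 0"
    and sep: "\<And>P. P \<in> \<P> \<Longrightarrow> separating_pair e (range en) P"
    and disj: "pairwise (\<lambda>P P'. disjnt (pair_supp P - range en) (pair_supp P' - range en)) \<P>"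
    and s: "s \<in> topspace (product_topology (\<lambda>_::nat. X) UNIV)"
  shows "\<exists>N. openin (product_topology (\<lambda>_::nat. X) UNIV) N \<and> s \<in> N \<and>
           finite {P \<in> \<P>. Pi UNIV (\<lambda>n. fst P (en n)) \<inter> N \<noteq> {}}"
proof -
  let ?R = "range en"
  have "s n \<in> topspace X" for n
    using s by (simp add: PiE_UNIV_domain Pi_iff)
  then have "(\<lambda>a. s (inv en a)) \<in> topspace XI"
    by (simp add: PiE_UNIV_domain)
  moreover have "countable ?R" by simp
  ultimately obtain w where w: "w \<in> Y" "w \<in> topspace XI" "\<And>a. a \<in> ?R \<Longrightarrow> w a = s (inv en a)"
    using open_meets_agreeing[OF openin_topspace] by metis
  have w_en: "w (en n) = s n" for n
    using w(3)[of "en n"] en by simp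
  have "e/2 > 0" using \<open>e > 0\<close> by simp
  then obtain T where T: "open_box X T" "w \<in> Pi UNIV T"
    and T_small: "\<And>u. u \<in> Y \<Longrightarrow> u \<in> Pi UNIV T \<Longrightarrow> \<bar>\<phi> u - \<phi> w\<bar> < e/2"
    using box_nbhd_small_variation[OF w(1)] by metis
  define N where "N = Pi UNIV (\<lambda>n. T (en n))"
  have "openin (product_topology (\<lambda>_::nat. X) UNIV) N"
    unfolding N_def by (rule openin_open_box[OF open_box_reindex[OF T(1) en]])
  moreover have "s \<in> N"
    unfolding N_def
  proof
    fix n show "s n \<in> T (en n)" using Pi_mem[OF T(2) UNIV_I, of "en n"] w_en[of n] by simp
  qed
  moreover have "{P \<in> \<P>. Pi UNIV (\<lambda>n. fst P (en n)) \<inter> N \<noteq> {}} \<subseteq>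
      (\<Union>a\<in>box_supp X T. {P \<in> \<P>. a \<in> pair_supp P - ?R})"
  proof
    fix P assume "P \<in> {P \<in> \<P>. Pi UNIV (\<lambda>n. fst P (en n)) \<inter> N \<noteq> {}}"
    then obtain s' where P: "P \<in> \<P>" and s': "s' \<in> Pi UNIV (\<lambda>n. fst P (en n))" "s' \<in> N"
      by blast
    have "fst P a \<inter> T a \<noteq> {}" if "a \<in> ?R" for a
      using that s' unfolding N_def by (auto simp: Pi_iff)
    then have "box_supp X T \<inter> (pair_supp P - ?R) \<noteq> {}"
      using pair_supp_meets_box_supp[OF sep[OF P] T(1) w(1) T(2) T_small] by blast
    then show "P \<in> (\<Union>a\<in>box_supp X T. {P \<in> \<P>. a \<in> pair_supp P - ?R})"
      using P by blast
  qed
  moreover have "finite (\<Union>a\<in>box_supp X T. {P \<in> \<P>. a \<in> pair_supp P - ?R})"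
    using T(1) finite_pairwise_disjnt_containing[OF disj] unfolding open_box_def by blast
  ultimately show ?thesis using finite_subset by blast
qed

lemma countable_disjoint_separating_family:
  fixes en :: "nat \<Rightarrow> 'i"
  assumes pa: "pseudo_aleph1_compact (product_topology (\<lambda>_::nat. X) UNIV)"
    and en: "inj en" and "e > 0"
    and sep: "\<And>P. P \<in> \<P> \<Longrightarrow> separating_pair e (range en) P"
    and disj: "pairwise (\<lambda>P P'. disjnt (pair_supp P - range en) (pair_supp P' - range en)) \<P>"
  shows "countable \<P>"
proof (rule pseudo_aleph1_compact_countable_family[OF pa, where Q = "\<lambda>P. Pi UNIV (\<lambda>n. fst P (en n))"])
  fix P assume "P \<in> \<P>"
  then have P: "separating_pair e (range en) P" by (rule sep)
  then have "open_box X (\<lambda>n. fst P (en n))"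
    using open_box_reindex[OF _ en] unfolding separating_pair_def by blast
  then show "openin (product_topology (\<lambda>_. X) UNIV) (Pi UNIV (\<lambda>n. fst P (en n)))"
    by (rule openin_open_box)
  show "Pi UNIV (\<lambda>n. fst P (en n)) \<noteq> {}"
    using P unfolding separating_pair_def by (simp add: Pi_eq_empty)
next
  fix s assume "s \<in> topspace (product_topology (\<lambda>_::nat. X) UNIV)"
  then show "\<exists>N. openin (product_topology (\<lambda>_. X) UNIV) N \<and> s \<in> N \<and>
      finite {P \<in> \<P>. Pi UNIV (\<lambda>n. fst P (en n)) \<inter> N \<noteq> {}}"
    using locally_finite_traces[OF en \<open>e > 0\<close> sep disj] by blast
qed

lemma countably_determined_if_pseudo_aleph1_compact:
  assumes pa: "pseudo_aleph1_compact (product_topology (\<lambda>_::nat. X) UNIV)"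
    and inf: "infinite (UNIV :: 'i set)" and "e > 0"
  shows "\<exists>M. countable M \<and> (\<forall>q\<in>Y. \<forall>q'\<in>Y. (\<forall>a\<in>M. q a = q' a) \<longrightarrow> \<bar>\<phi> q - \<phi> q'\<bar> \<le> e)"
proof (rule ccontr)
  \<comment> \<open>Choose R such that every countable M \<supseteq> R has a separating pair whose support meets M
    only inside R, and a maximal family of separating pairs over R with supports pairwise
    disjoint off R. Pseudo-aleph_1-compactness of X^omega makes the family countable, so the pair chosen
    for M = R \<union> (all supports of the family) can be added to it; by maximality it is already a
    member, hence its support lies in R, which no separating pair allows.\<close>
  assume not_det: "\<not> ?thesis"
  have ex: "\<exists>P. separating_pair e M P" if M: "countable M" for M
  proof -
    obtain q q' where "q \<in> Y" "q' \<in> Y" "\<forall>a\<in>M. q a = q' a" "e < \<bar>\<phi> q - \<phi> q'\<bar>"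
      using not_det M by (auto simp: not_le)
    then show ?thesis using separating_pair_exists by metis
  qed
  have "\<exists>R. countable R \<and>
      (\<forall>M. countable M \<and> R \<subseteq> M \<longrightarrow> (\<exists>P. separating_pair e M P \<and> pair_supp P \<inter> M \<subseteq> R))"
    using ex separating_pair_antimono finite_pair_supp by (rule countable_reflecting_set)
  then obtain R0 where R0: "countable R0"
    and reflect: "\<forall>M. countable M \<and> R0 \<subseteq> M \<longrightarrow> (\<exists>P. separating_pair e M P \<and> pair_supp P \<inter> M \<subseteq> R0)"
    by blast
  obtain en :: "nat \<Rightarrow> 'i" where en: "inj en" "R0 \<subseteq> range en"
    using countable_subset_range_inj[OF R0 inf] by metis
  let ?R = "range en"
  let ?disj = "\<lambda>P P'. disjnt (pair_supp P - ?R) (pair_supp P' - ?R)"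
  obtain \<P> where \<P>: "\<P> \<subseteq> {P. separating_pair e ?R P}" "pairwise ?disj \<P>"
    and max: "\<forall>P\<in>{P. separating_pair e ?R P}. pairwise ?disj (insert P \<P>) \<longrightarrow> P \<in> \<P>"
    using maximal_pairwise_disjnt_subset[of "{P. separating_pair e ?R P}" "\<lambda>P. pair_supp P - ?R"]
    by blast
  have "countable \<P>"
    using countable_disjoint_separating_family[OF pa en(1) \<open>e > 0\<close> _ \<P>(2)] \<P>(1) by blast
  define M where "M = ?R \<union> \<Union>(pair_supp ` \<P>)"
  have "countable (\<Union>(pair_supp ` \<P>))"
    using \<open>countable \<P>\<close>
  proof (rule countable_UN)
    fix P assume "P \<in> \<P>"
    then show "countable (pair_supp P)"
      using \<P>(1) finite_pair_supp countable_finite by blast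
  qed
  then have "countable M" unfolding M_def by simp
  moreover have "R0 \<subseteq> M" using en(2) unfolding M_def by blast
  ultimately obtain P0 where P0: "separating_pair e M P0" "pair_supp P0 \<inter> M \<subseteq> R0"
    using reflect by blast
  have "separating_pair e ?R P0"
    using separating_pair_antimono[OF P0(1)] unfolding M_def by blast
  moreover have "pairwise ?disj (insert P0 \<P>)"
    using \<P>(2) P0(2) en(2) unfolding M_def pairwise_insert disjnt_def by blast
  ultimately have "P0 \<in> \<P>" using max by blast
  then have "pair_supp P0 \<subseteq> ?R" using P0(2) en(2) unfolding M_def by blast
  then show False
    using pair_supp_not_subset[OF \<open>separating_pair e ?R P0\<close>] \<open>e > 0\<close> by simp
qed

lemma vanishing_oscillation_of_continuous:
  assumes "infinite (UNIV :: 'i set)"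
    and "pseudo_aleph1_compact (product_topology (\<lambda>_::nat. X) UNIV) \<or> first_countable X"
  shows "vanishing_oscillation XI Y \<phi>"
  using assms vanishing_oscillation_if_first_countable vanishing_oscillation_if_countably_determined
    countably_determined_if_pseudo_aleph1_compact by blast

end

theorem proposition4p5:
  fixes X :: "'a topology" and f :: "'g::ab_group_add \<Rightarrow> 'a"
  assumes "infinite (UNIV :: 'g set)"
    and "\<exists>a b. a \<in> topspace X \<and> b \<in> topspace X \<and> a \<noteq> b"
    and "korovin_mapping X f"
    and "pseudo_aleph1_compact (product_topology (\<lambda>_::nat. X) UNIV)
         \<or> first_countable X \<or> separable_space X"
  shows "t35_space (subtopology (product_topology (\<lambda>_::'g. X) UNIV) (korovin_orbit f))
         \<longleftrightarrow> t35_space X"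
proof -
  have dense: "omega_dense X (korovin_orbit f)"
    using assms(3) by (rule korovin_orbit_omega_dense)
  have "pseudo_aleph1_compact (product_topology (\<lambda>_::nat. X) UNIV) \<or> first_countable X"
    using assms(4) separable_space_power_nat separable_imp_pseudo_aleph1_compact by blast
  then have osc: "vanishing_oscillation (product_topology (\<lambda>_. X) UNIV) (korovin_orbit f) \<phi>"
    if "continuous_map (subtopology (product_topology (\<lambda>_. X) UNIV) (korovin_orbit f)) euclideanreal \<phi>"
    for \<phi>
    using dense that assms(1)
    by (intro omega_dense_continuous.vanishing_oscillation_of_continuous omega_dense_continuous.intro
        omega_dense_continuous_axioms.intro)
  show ?thesis
    unfolding t35_space_iff_completely_regular_space
  proof
    assume "completely_regular_space (subtopology (product_topology (\<lambda>_. X) UNIV) (korovin_orbit f))"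
    then show "completely_regular_space X"
      by (rule omega_dense.completely_regular_space_factor[OF dense _ osc])
  next
    assume "completely_regular_space X"
    then show "completely_regular_space (subtopology (product_topology (\<lambda>_. X) UNIV) (korovin_orbit f))"
      by (simp add: completely_regular_space_subtopology completely_regular_space_product_topology)
  qed
qed

end
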